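(* Let $\psi_C(t)=\exp[-t\tanh t]$, $\psi_S(t)=\exp[1-t\coth t]$ and $\psi_T(t)=\exp[\frac{2t}{\sinh(2t)}-1]$ (the background driving characteristic functions of $1/\cosh t$, $t/\sinh t$ and $\tanh t/t$ respectively). Their free analogues have Voiculescu transforms, for $t>0$: (a) $V_{\tilde\psi_C}(it)=i\big[\tfrac{t^2}{2}\zeta(2,\tfrac t2)-\tfrac{t^2}{4}\zeta(2,\tfrac t4)+1\big]$; (b) $V_{\tilde\psi_S}(it)=i\big[1+t-\tfrac12t^2\zeta(2,\tfrac t2)\big]$; (c) $V_{\tilde\psi_T}(it)=it\big[t\zeta(2,\tfrac t2)-\tfrac t4\zeta(2,\tfrac t4)-1\big]=it\big[\tfrac t4\zeta(2,\tfrac{t+2}{4})-1\big]$.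
   Context: $\zeta(s,a):=\sum_{k=0}^\infty(k+a)^{-s}$ is the Hurwitz zeta function ($s>1$, $a>0$). For an infinitely divisible characteristic function $\phi$ with Khintchine exponent $\log\phi$ (the continuous logarithm with $\log\phi(0)=0$; here e.g. $\log\psi_C(t)=-t\tanh t$), its free analogue $\tilde\phi$ is the $\boxplus$-infinitely divisible probability measure whose Voiculescu transform satisfies $V_{\tilde\phi}(it)=it^2\int_0^\infty\overline{\log\phi(s)}e^{-ts}ds$ for $t>0$. *)

theory Defs
  imports "HOL-Analysis.Analysis"
begin

definition hurwitz_zeta :: "real \<Rightarrow> real \<Rightarrow> real" where
  "hurwitz_zeta s a = (\<Sum>k. (real k + a) powr (- s))"

text \<open>Khintchine exponents (continuous logarithms, vanishing at 0) of the
  background driving characteristic functions psi_C, psi_S, psi_T.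
  At s = 0 we use the continuous extension (value 0).\<close>
definition logpsi_C :: "real \<Rightarrow> real" where
  "logpsi_C s = - s * tanh s"

definition logpsi_S :: "real \<Rightarrow> real" where
  "logpsi_S s = (if s = 0 then 0 else 1 - s * cosh s / sinh s)"

definition logpsi_T :: "real \<Rightarrow> real" where
  "logpsi_T s = (if s = 0 then 0 else 2 * s / sinh (2 * s) - 1)"

text \<open>Voiculescu transform of the free analogue, evaluated at i t (t > 0):
  V(it) = i t^2 int_0^infty conj(log phi(s)) e^{-ts} ds.\<close>
definition free_voiculescu_it :: "(real \<Rightarrow> complex) \<Rightarrow> real \<Rightarrow> complex" where
  "free_voiculescu_it logphi t =
     \<i> * complex_of_real (t^2) *
       (LINT s:{0..}|lborel. cnj (logphi s) * complex_of_real (exp (- t * s)))"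

end

theory Submission
  imports Defs "HOL-Probability.Probability"
begin

text \<open>With q = exp(-2s) the three Khintchine exponents are rational in q:
  tanh s = (1 - q)/(1 + q), coth s = (1 + q)/(1 - q) and 1/sinh(2s) = 2q/(1 - q^2).
  Hence each log psi(s) exp(-ts) is a combination of exp(-ts), s exp(-ts) and kernels
  s exp(-as)/(1 - exp(-bs)). Expanding a kernel as a geometric series and integrating termwise
  gives the classical representation
  int_0^oo s^n exp(-as)/(1 - exp(-bs)) ds = n! zeta(n + 1, a/b)/b^(n + 1),
  and the shift and duplication formulas of the Hurwitz zeta function bring the three Laplace
  transforms into the stated forms.\<close>

section \<open>The Hurwitz zeta function\<close>

lemma hurwitz_zeta_sums:
  assumes "s > 1" "a > 0"
  shows "(\<lambda>k. (real k + a) powr - s) sums hurwitz_zeta s a"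
proof -
  have "summable (\<lambda>k. (real k + a) powr - s)"
  proof (rule summable_comparison_test')
    show "summable (\<lambda>k. real k powr - s)"
      using assms(1) by (simp add: summable_real_powr_iff)
    show "norm ((real k + a) powr - s) \<le> real k powr - s" if "k \<ge> 1" for k
      using that assms by (auto intro: powr_mono2')
  qed
  then show ?thesis
    unfolding hurwitz_zeta_def by (rule summable_sums)
qed

lemma hurwitz_zeta_shift:
  assumes "s > 1" "a > 0"
  shows "hurwitz_zeta s (a + 1) = hurwitz_zeta s a - a powr - s"
proof -
  have "(\<lambda>k. (real (Suc k) + a) powr - s) sums (hurwitz_zeta s a - a powr - s)"
    using hurwitz_zeta_sums[OF assms] sums_Suc_iff[of "\<lambda>k. (real k + a) powr - s"] by simp
  moreover have "(\<lambda>k. (real (Suc k) + a) powr - s) sums hurwitz_zeta s (a + 1)"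
    using hurwitz_zeta_sums[of s "a + 1"] assms by (simp add: add_ac)
  ultimately show ?thesis
    by (simp add: sums_unique2)
qed

lemma hurwitz_zeta_duplication:
  assumes "s > 1" "a > 0"
  shows "hurwitz_zeta s a + hurwitz_zeta s (a + 1/2) = 2 powr s * hurwitz_zeta s (2 * a)"
proof -
  define f where "f n = (real n + 2 * a) powr - s" for n
  have pairs: "f (2 * k) + f (2 * k + 1)
      = 2 powr - s * ((real k + a) powr - s + (real k + (a + 1/2)) powr - s)" for k
  proof -
    have "f (2 * k) = 2 powr - s * (real k + a) powr - s"
      "f (2 * k + 1) = 2 powr - s * (real k + (a + 1/2)) powr - s"
      unfolding f_def using assms(2) by (subst powr_mult[symmetric]; simp add: algebra_simps)+
    then show ?thesis
      by (simp add: distrib_left)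
  qed
  have "f sums hurwitz_zeta s (2 * a)"
    unfolding f_def using assms by (intro hurwitz_zeta_sums) simp_all
  then have "(\<lambda>k. sum f {k * 2..<k * 2 + 2}) sums hurwitz_zeta s (2 * a)"
    by (rule sums_group) simp
  moreover have "sum f {k * 2..<k * 2 + 2}
      = 2 powr - s * ((real k + a) powr - s + (real k + (a + 1/2)) powr - s)" for k
    using pairs[of k] by (simp add: numeral_2_eq_2 mult.commute)
  ultimately have "(\<lambda>k. 2 powr - s * ((real k + a) powr - s + (real k + (a + 1/2)) powr - s))
      sums hurwitz_zeta s (2 * a)" by simp
  moreover have "(\<lambda>k. 2 powr - s * ((real k + a) powr - s + (real k + (a + 1/2)) powr - s))
      sums (2 powr - s * (hurwitz_zeta s a + hurwitz_zeta s (a + 1/2)))"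
    using assms by (intro sums_mult sums_add hurwitz_zeta_sums) simp_all
  ultimately have "2 powr - s * (hurwitz_zeta s a + hurwitz_zeta s (a + 1/2)) = hurwitz_zeta s (2 * a)"
    by (simp add: sums_unique2)
  then show ?thesis
    by (simp add: powr_minus field_simps)
qed

section \<open>Laplace transforms\<close>

lemma set_integral_power_exp:
  fixes a :: real
  assumes "a > 0"
  shows "set_integrable lborel {0..} (\<lambda>s. s ^ n * exp (- a * s))"
    and "(LINT s:{0..}|lborel. s ^ n * exp (- a * s)) = fact n / a ^ Suc n"
proof -
  have erlang: "indicator {0..} s *\<^sub>R (s ^ n * exp (- a * s)) = erlang_density 0 a s * s ^ n / a" for s
    using assms by (auto simp: erlang_density_def split: split_indicator)
  have "(\<integral>\<^sup>+ s. ennreal (erlang_density 0 a s * s ^ n / a) \<partial>lborel)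
      = (\<integral>\<^sup>+ s. ennreal (1 / a) * ennreal (erlang_density 0 a s * s ^ n) \<partial>lborel)"
    using assms by (intro nn_integral_cong) (auto simp: ennreal_mult'[symmetric] erlang_density_def)
  also have "\<dots> = ennreal (1 / a) * ennreal (fact n / a ^ n)"
    using nn_integral_erlang_ith_moment[OF assms, of 0 n] by (simp add: nn_integral_cmult)
  also have "\<dots> = ennreal (fact n / a ^ Suc n)"
    using assms by (simp add: ennreal_mult'[symmetric])
  finally have "integrable lborel (\<lambda>s. erlang_density 0 a s * s ^ n / a) \<and>
      integral\<^sup>L lborel (\<lambda>s. erlang_density 0 a s * s ^ n / a) = fact n / a ^ Suc n"
    using assms by (intro nn_integral_eq_integrable[THEN iffD1])
      (auto simp: erlang_density_def)
  then show "set_integrable lborel {0..} (\<lambda>s. s ^ n * exp (- a * s))"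
    and "(LINT s:{0..}|lborel. s ^ n * exp (- a * s)) = fact n / a ^ Suc n"
    unfolding set_integrable_def set_lebesgue_integral_def erlang by simp_all
qed

lemma set_integral_suminf_nonneg:
  fixes f :: "nat \<Rightarrow> 'a \<Rightarrow> real"
  assumes integrable: "\<And>i. set_integrable M A (f i)"
    and nonneg: "\<And>i x. x \<in> A \<Longrightarrow> f i x \<ge> 0"
    and sums: "\<And>x. x \<in> A \<Longrightarrow> (\<lambda>i. f i x) sums F x"
    and integrals_sum: "(\<lambda>i. LINT x:A|M. f i x) sums I"
  shows "set_integrable M A F" and "(LINT x:A|M. F x) = I"
proof -
  define g where "g i x = indicator A x * f i x" for i x
  have g_integrable: "integrable M (g i)" for i
    using integrable unfolding set_integrable_def g_def by simp
  have "summable (\<lambda>i. norm (g i x))" for x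
    using sums nonneg by (cases "x \<in> A") (auto simp: g_def sums_iff)
  then have norm_summable: "AE x in M. summable (\<lambda>i. norm (g i x))"
    by simp
  have "(\<integral>x. norm (g i x) \<partial>M) = (LINT x:A|M. f i x)" for i
    unfolding set_lebesgue_integral_def g_def
    by (intro Bochner_Integration.integral_cong) (auto simp: nonneg split: split_indicator)
  then have norm_integrals_summable: "summable (\<lambda>i. \<integral>x. norm (g i x) \<partial>M)"
    using integrals_sum by (simp add: sums_iff)
  note integrable_suminf[OF g_integrable norm_summable norm_integrals_summable]
    sums_integral[OF g_integrable norm_summable norm_integrals_summable]
  moreover have "(\<Sum>i. g i x) = indicator A x * F x" for x
    using sums by (auto simp: g_def sums_iff split: split_indicator)
  moreover have "integral\<^sup>L M (g i) = (LINT x:A|M. f i x)" for i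
    unfolding set_lebesgue_integral_def g_def by simp
  ultimately show "set_integrable M A F" and "(LINT x:A|M. F x) = I"
    using integrals_sum unfolding set_integrable_def set_lebesgue_integral_def
    by (simp_all add: sums_unique2)
qed

lemma set_integral_power_exp_div_one_minus_exp:
  fixes a b :: real
  assumes "n > 0" "a > 0" "b > 0"
  shows "set_integrable lborel {0..} (\<lambda>s. s ^ n * exp (- a * s) / (1 - exp (- b * s)))"
    and "(LINT s:{0..}|lborel. s ^ n * exp (- a * s) / (1 - exp (- b * s)))
           = fact n / b ^ Suc n * hurwitz_zeta (Suc n) (a / b)"
proof -
  define g where "g k s = s ^ n * exp (- (a + b * real k) * s)" for k s
  have exponent_pos: "a + b * real k > 0" for k
    using assms by (simp add: add_pos_nonneg)
  have series: "(\<lambda>k. g k s) sums (s ^ n * exp (- a * s) / (1 - exp (- b * s)))" if "s \<ge> 0" for s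
  proof (cases "s = 0")
    case True
    then show ?thesis using assms(1) by (simp add: g_def power_0_left)
  next
    case False
    with that assms(3) have "norm (exp (- b * s)) < 1" by simp
    then have "(\<lambda>k. s ^ n * exp (- a * s) * exp (- b * s) ^ k)
        sums (s ^ n * exp (- a * s) * (1 / (1 - exp (- b * s))))"
      by (intro sums_mult geometric_sums)
    moreover have "g k s = s ^ n * exp (- a * s) * exp (- b * s) ^ k" for k
      by (simp add: g_def exp_of_nat_mult[symmetric] exp_add[symmetric] algebra_simps)
    ultimately show ?thesis by simp
  qed
  have term_integral: "(LINT s:{0..}|lborel. g k s)
      = fact n / b ^ Suc n * (real k + a / b) powr - real (Suc n)" for k
  proof -
    have "real k + a / b > 0"
      using assms by (simp add: add_nonneg_pos)
    then have "(real k + a / b) powr - real (Suc n) = inverse ((real k + a / b) ^ Suc n)"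
      by (simp only: powr_minus powr_realpow)
    moreover have "a + b * real k = b * (real k + a / b)"
      using assms(3) by (simp add: field_simps)
    ultimately show ?thesis
      using set_integral_power_exp(2)[OF exponent_pos[of k], of n]
      by (simp only: g_def power_mult_distrib) (simp add: divide_inverse)
  qed
  have integrals: "(\<lambda>k. LINT s:{0..}|lborel. g k s)
      sums (fact n / b ^ Suc n * hurwitz_zeta (Suc n) (a / b))"
    unfolding term_integral using assms by (intro sums_mult hurwitz_zeta_sums) simp_all
  have term_integrable: "set_integrable lborel {0..} (g k)" for k
    unfolding g_def by (rule set_integral_power_exp(1)[OF exponent_pos])
  have term_nonneg: "g k s \<ge> 0" if "s \<in> {0..}" for k s
    using that by (simp add: g_def)
  show "set_integrable lborel {0..} (\<lambda>s. s ^ n * exp (- a * s) / (1 - exp (- b * s)))"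
    and "(LINT s:{0..}|lborel. s ^ n * exp (- a * s) / (1 - exp (- b * s)))
           = fact n / b ^ Suc n * hurwitz_zeta (Suc n) (a / b)"
    using set_integral_suminf_nonneg[of lborel "{0..}" g, OF term_integrable term_nonneg _ integrals]
      series by simp_all
qed

lemma set_integral_exp_div_one_minus_exp:
  fixes a b :: real
  assumes "a > 0" "b > 0"
  shows "set_integrable lborel {0..} (\<lambda>s. s * exp (- a * s) / (1 - exp (- b * s)))"
    and "(LINT s:{0..}|lborel. s * exp (- a * s) / (1 - exp (- b * s))) = hurwitz_zeta 2 (a / b) / b\<^sup>2"
  using set_integral_power_exp_div_one_minus_exp[of 1 a b] assms
  by (simp_all add: power2_eq_square)

text \<open>The kernel s exp(-as)/(1 - exp(-bs)) takes the junk value 0 / 0 = 0 at s = 0, so the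
  expansions of the exponents below only hold for s > 0.\<close>

lemma set_integral_cong_pos:
  fixes f g :: "real \<Rightarrow> real"
  assumes [measurable]: "f \<in> borel_measurable borel" "g \<in> borel_measurable borel"
    and "\<And>s. s > 0 \<Longrightarrow> f s = g s"
  shows "(LINT s:{0..}|lborel. f s) = (LINT s:{0..}|lborel. g s)"
proof (rule set_lebesgue_integral_cong_AE)
  show "AE s\<in>{0..} in lborel. f s = g s"
    using AE_lborel_singleton[of 0] by eventually_elim (simp add: assms(3))
qed simp_all

section \<open>The three Khintchine exponents\<close>

lemma sinh_real_exp_neg: "sinh (x :: real) = (1 - exp (- 2 * x)) / (2 * exp (- x))"
proof -
  have "exp (- 2 * x) = exp (- x) * exp (- x)" "exp x * exp (- x) = 1"
    by (simp_all flip: exp_add)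
  then show ?thesis
    by (simp add: sinh_def field_simps)
qed

lemma cosh_real_exp_neg: "cosh (x :: real) = (1 + exp (- 2 * x)) / (2 * exp (- x))"
proof -
  have "exp (- 2 * x) = exp (- x) * exp (- x)" "exp x * exp (- x) = 1"
    by (simp_all flip: exp_add)
  then show ?thesis
    by (simp add: cosh_def field_simps)
qed

lemma coth_real_exp_neg:
  assumes "(x :: real) \<noteq> 0"
  shows "cosh x / sinh x = (1 + exp (- 2 * x)) / (1 - exp (- 2 * x))"
  using assms by (simp add: sinh_real_exp_neg cosh_real_exp_neg)

lemma logpsi_C_times_exp:
  assumes "s > 0"
  shows "logpsi_C s * exp (- t * s) = 2 * (s * exp (- (t + 2) * s) / (1 - exp (- 4 * s)))
    - 2 * (s * exp (- (t + 4) * s) / (1 - exp (- 4 * s))) - s * exp (- t * s)"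
proof -
  define q where "q = exp (- 2 * s)"
  have q: "0 < q" "q < 1"
    using assms by (simp_all add: q_def)
  then have "q\<^sup>2 < 1"
    by (simp add: power_less_one_iff)
  have tanh: "tanh s = 1 - 2 * (q - q\<^sup>2) / (1 - q\<^sup>2)"
    unfolding tanh_real_altdef q_def[symmetric] using q \<open>q\<^sup>2 < 1\<close>
    by (simp add: field_simps power2_eq_square)
  have "exp (- 4 * s) = q\<^sup>2" "exp (- (t + 2) * s) = exp (- t * s) * q"
    "exp (- (t + 4) * s) = exp (- t * s) * q\<^sup>2"
    by (simp_all add: q_def power2_eq_square algebra_simps flip: exp_add)
  then show ?thesis
    unfolding logpsi_C_def tanh by (simp add: algebra_simps diff_divide_distrib)
qed

lemma logpsi_S_times_exp:
  assumes "s > 0"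
  shows "logpsi_S s * exp (- t * s)
    = exp (- t * s) - s * exp (- t * s) - 2 * (s * exp (- (t + 2) * s) / (1 - exp (- 2 * s)))"
proof -
  define q where "q = exp (- 2 * s)"
  have "q < 1"
    using assms by (simp add: q_def)
  have "cosh s / sinh s = 1 + 2 * q / (1 - q)"
    unfolding coth_real_exp_neg[OF assms[THEN less_imp_neq, symmetric]] q_def[symmetric]
    using \<open>q < 1\<close> by (simp add: field_simps)
  then have logpsi: "logpsi_S s = 1 - s - 2 * s * q / (1 - q)"
    using assms unfolding logpsi_S_def by (simp add: field_simps)
  have shift: "exp (- (t + 2) * s) = exp (- t * s) * q"
    by (simp add: q_def algebra_simps flip: exp_add)
  show ?thesis
    unfolding logpsi shift q_def[symmetric] using \<open>q < 1\<close> by (simp add: field_simps)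
qed

lemma logpsi_T_times_exp:
  assumes "s > 0"
  shows "logpsi_T s * exp (- t * s) = 4 * (s * exp (- (t + 2) * s) / (1 - exp (- 4 * s))) - exp (- t * s)"
proof -
  define q where "q = exp (- 2 * s)"
  have "q > 0" "exp (- 4 * s) < 1"
    using assms by (simp_all add: q_def)
  have sinh: "sinh (2 * s) = (1 - exp (- 4 * s)) / (2 * q)"
    unfolding sinh_real_exp_neg q_def by simp
  have "exp (- (t + 2) * s) = exp (- t * s) * q"
    by (simp add: q_def algebra_simps flip: exp_add)
  then show ?thesis
    using assms \<open>q > 0\<close> \<open>exp (- 4 * s) < 1\<close> unfolding logpsi_T_def sinh
    by (simp add: field_simps)
qed

lemma logpsi_measurable [measurable]:
  "logpsi_C \<in> borel_measurable borel" "logpsi_S \<in> borel_measurable borel"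
  "logpsi_T \<in> borel_measurable borel"
  unfolding logpsi_C_def logpsi_S_def logpsi_T_def tanh_def cosh_def sinh_def by measurable

lemma laplace_logpsi_C:
  assumes "t > 0"
  shows "(LINT s:{0..}|lborel. logpsi_C s * exp (- t * s))
    = (hurwitz_zeta 2 ((t + 2) / 4) - hurwitz_zeta 2 ((t + 4) / 4)) / 8 - 1 / t\<^sup>2"
proof -
  have "t + 2 > 0" "t + 4 > 0" "(4 :: real) > 0"
    using assms by simp_all
  note F2 = set_integral_exp_div_one_minus_exp[OF \<open>t + 2 > 0\<close> \<open>4 > 0\<close>]
    and F4 = set_integral_exp_div_one_minus_exp[OF \<open>t + 4 > 0\<close> \<open>4 > 0\<close>]
    and E = set_integral_power_exp[OF assms, of 1, unfolded power_one_right]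
  note I2 = set_integrable_mult_right[OF F2(1), of 2]
    and I4 = set_integrable_mult_right[OF F4(1), of 2]
  have "(LINT s:{0..}|lborel. logpsi_C s * exp (- t * s))
      = (LINT s:{0..}|lborel. 2 * (s * exp (- (t + 2) * s) / (1 - exp (- 4 * s)))
          - 2 * (s * exp (- (t + 4) * s) / (1 - exp (- 4 * s))) - s * exp (- t * s))"
    by (intro set_integral_cong_pos logpsi_C_times_exp) measurable
  also have "\<dots> = 2 * (LINT s:{0..}|lborel. s * exp (- (t + 2) * s) / (1 - exp (- 4 * s)))
      - 2 * (LINT s:{0..}|lborel. s * exp (- (t + 4) * s) / (1 - exp (- 4 * s)))
      - (LINT s:{0..}|lborel. s * exp (- t * s))"
    by (simp only: set_integral_diff(2)[OF set_integral_diff(1)[OF I2 I4] E(1)]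
        set_integral_diff(2)[OF I2 I4] set_integral_mult_right)
  also have "\<dots> = (hurwitz_zeta 2 ((t + 2) / 4) - hurwitz_zeta 2 ((t + 4) / 4)) / 8 - 1 / t\<^sup>2"
    unfolding F2(2) F4(2) E(2) by (simp add: power2_eq_square)
  finally show ?thesis .
qed

lemma laplace_logpsi_S:
  assumes "t > 0"
  shows "(LINT s:{0..}|lborel. logpsi_S s * exp (- t * s))
    = 1 / t - 1 / t\<^sup>2 - hurwitz_zeta 2 ((t + 2) / 2) / 2"
proof -
  have "t + 2 > 0" "(2 :: real) > 0"
    using assms by simp_all
  note F = set_integral_exp_div_one_minus_exp[OF \<open>t + 2 > 0\<close> \<open>2 > 0\<close>]
    and E0 = set_integral_power_exp[OF assms, of 0, unfolded power_0 mult_1]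
    and E1 = set_integral_power_exp[OF assms, of 1, unfolded power_one_right]
  note I = set_integrable_mult_right[OF F(1), of 2]
  have "(LINT s:{0..}|lborel. logpsi_S s * exp (- t * s))
      = (LINT s:{0..}|lborel. exp (- t * s) - s * exp (- t * s)
          - 2 * (s * exp (- (t + 2) * s) / (1 - exp (- 2 * s))))"
    by (intro set_integral_cong_pos logpsi_S_times_exp) measurable
  also have "\<dots> = (LINT s:{0..}|lborel. exp (- t * s)) - (LINT s:{0..}|lborel. s * exp (- t * s))
      - 2 * (LINT s:{0..}|lborel. s * exp (- (t + 2) * s) / (1 - exp (- 2 * s)))"
    by (simp only: set_integral_diff(2)[OF set_integral_diff(1)[OF E0(1) E1(1)] I]
        set_integral_diff(2)[OF E0(1) E1(1)] set_integral_mult_right)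
  also have "\<dots> = 1 / t - 1 / t\<^sup>2 - hurwitz_zeta 2 ((t + 2) / 2) / 2"
    unfolding F(2) E0(2) E1(2) by (simp add: power2_eq_square)
  finally show ?thesis .
qed

lemma laplace_logpsi_T:
  assumes "t > 0"
  shows "(LINT s:{0..}|lborel. logpsi_T s * exp (- t * s)) = hurwitz_zeta 2 ((t + 2) / 4) / 4 - 1 / t"
proof -
  have "t + 2 > 0" "(4 :: real) > 0"
    using assms by simp_all
  note F = set_integral_exp_div_one_minus_exp[OF \<open>t + 2 > 0\<close> \<open>4 > 0\<close>]
    and E0 = set_integral_power_exp[OF assms, of 0, unfolded power_0 mult_1]
  note I = set_integrable_mult_right[OF F(1), of 4]
  have "(LINT s:{0..}|lborel. logpsi_T s * exp (- t * s))
      = (LINT s:{0..}|lborel. 4 * (s * exp (- (t + 2) * s) / (1 - exp (- 4 * s))) - exp (- t * s))"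
    by (intro set_integral_cong_pos logpsi_T_times_exp) measurable
  also have "\<dots> = 4 * (LINT s:{0..}|lborel. s * exp (- (t + 2) * s) / (1 - exp (- 4 * s)))
      - (LINT s:{0..}|lborel. exp (- t * s))"
    by (simp only: set_integral_diff(2)[OF I E0(1)] set_integral_mult_right)
  also have "\<dots> = hurwitz_zeta 2 ((t + 2) / 4) / 4 - 1 / t"
    unfolding F(2) E0(2) by (simp add: power2_eq_square)
  finally show ?thesis .
qed

lemma free_voiculescu_it_of_real:
  "free_voiculescu_it (\<lambda>s. complex_of_real (f s)) t
     = \<i> * complex_of_real (t\<^sup>2 * (LINT s:{0..}|lborel. f s * exp (- t * s)))"
  using set_integral_complex_of_real[of lborel "{0..}" "\<lambda>s. f s * exp (- t * s)"]
  by (simp add: free_voiculescu_it_def)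

theorem corollary5:
  fixes t :: real
  assumes "t > 0"
  shows "(free_voiculescu_it (\<lambda>s. complex_of_real (logpsi_C s)) t =
           \<i> * complex_of_real (t^2 / 2 * hurwitz_zeta 2 (t / 2)
                                - t^2 / 4 * hurwitz_zeta 2 (t / 4) + 1)) \<and>
         (free_voiculescu_it (\<lambda>s. complex_of_real (logpsi_S s)) t =
           \<i> * complex_of_real (1 + t - t^2 / 2 * hurwitz_zeta 2 (t / 2))) \<and>
         (free_voiculescu_it (\<lambda>s. complex_of_real (logpsi_T s)) t =
           \<i> * complex_of_real t * complex_of_real
              (t * hurwitz_zeta 2 (t / 2) - t / 4 * hurwitz_zeta 2 (t / 4) - 1)) \<and>
         (free_voiculescu_it (\<lambda>s. complex_of_real (logpsi_T s)) t =
           \<i> * complex_of_real t * complex_of_real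
              (t / 4 * hurwitz_zeta 2 ((t + 2) / 4) - 1))"
proof -
  have shift: "hurwitz_zeta 2 (a + 1) = hurwitz_zeta 2 a - 1 / a\<^sup>2" if "a > 0" for a
    using hurwitz_zeta_shift[of 2 a] that by (simp add: powr_minus powr_numeral divide_inverse)
  have args: "(t + 2) / 2 = t / 2 + 1" "(t + 4) / 4 = t / 4 + 1" "(t + 2) / 4 = t / 4 + 1 / 2"
    by simp_all
  have zeta: "hurwitz_zeta 2 ((t + 2) / 2) = hurwitz_zeta 2 (t / 2) - 4 / t\<^sup>2"
      "hurwitz_zeta 2 ((t + 4) / 4) = hurwitz_zeta 2 (t / 4) - 16 / t\<^sup>2"
      "hurwitz_zeta 2 ((t + 2) / 4) = 4 * hurwitz_zeta 2 (t / 2) - hurwitz_zeta 2 (t / 4)"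
    unfolding args using shift[of "t / 2"] shift[of "t / 4"] hurwitz_zeta_duplication[of 2 "t / 4"] assms
    by (simp_all add: power_divide algebra_simps)
  show ?thesis
    unfolding free_voiculescu_it_of_real laplace_logpsi_C[OF assms] laplace_logpsi_S[OF assms]
      laplace_logpsi_T[OF assms] zeta
    using assms by (simp add: field_simps power2_eq_square)
qed

end
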